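(* Let $n\ge4$ and let $\sigma_1,\dots,\sigma_n>0$ be such that the sequence $(0,\sigma_1^2,\dots,\sigma_n^2,0)$ is concave. Then $$\frac{n-1}{n}\sum_{i=1}^n\sigma_i^2\;>\;2\max_{\substack{x\in\mathbb{R}^n\setminus\{0\}\\ x_1+\cdots+x_n=0}}\frac{\sigma_1^2x_1^2+\cdots+\sigma_n^2x_n^2}{x_1^2+\cdots+x_n^2}.$$
   Context: A finite sequence $(a_1,\dots,a_m)$ is concave if every three consecutive elements satisfy $a_{i+1}\ge\frac12(a_i+a_{i+2})$. *)

theory Defs
  imports "HOL-Analysis.Analysis"
begin

definition concave_seq :: "real list \<Rightarrow> bool" where
  "concave_seq a \<longleftrightarrow>
     (\<forall>i. i + 2 < length a \<longrightarrow> a ! (i+1) \<ge> (a ! i + a ! (i+2)) / 2)"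

definition rayleigh_values :: "nat \<Rightarrow> (nat \<Rightarrow> real) \<Rightarrow> real set" where
  "rayleigh_values n \<sigma> =
     {(\<Sum>i=1..n. (\<sigma> i)^2 * (x i)^2) / (\<Sum>i=1..n. (x i)^2) | x.
        (\<exists>i\<in>{1..n}. x i \<noteq> 0) \<and> (\<Sum>i=1..n. x i) = 0}"

end

theory Submission
  imports Defs
begin

(* Write b_0 = 0, b_i = sigma_i^2 (1 <= i <= n), b_(n+1) = 0, a concave
   sequence, and T = b_1 + ... + b_n.  A concave sequence starting at 0 has decreasing
   ratios b_k / k ("chord" property); summing this from both ends shows that every value
   is dominated by the average:  (n+1)/2 * b_k <= T.  The Rayleigh quotient is at most
   max_k b_k, so for n >= 5 we get  2 * Sup <= 4T/(n+1) < (n-1)/n * T.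
   For n = 4 this crude bound is not enough; instead an explicit sum-of-squares
   certificate shows that the quotient is at most 37/100 * T < 3/8 * T on the
   hyperplane x_1 + ... + x_4 = 0, using the four concavity inequalities as weights. *)

section \<open>Concave sequences indexed by naturals\<close>

definition midpoint_concave :: "nat \<Rightarrow> (nat \<Rightarrow> real) \<Rightarrow> bool" where
  "midpoint_concave N b \<longleftrightarrow> (\<forall>i. i + 2 \<le> N \<longrightarrow> b i + b (i + 2) \<le> 2 * b (i + 1))"

lemma chord_step:
  assumes conc: "midpoint_concave N b" and b0: "b 0 = 0" and kN: "k + 1 \<le> N"
  shows "real k * b (k + 1) \<le> real (k + 1) * b k"
  using kN
proof (induction k)
  case 0 then show ?case using b0 by simp
next
  case (Suc k)
  have IH: "real k * b (k + 1) \<le> real (k + 1) * b k" using Suc by simp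
  have "b k + b (k + 2) \<le> 2 * b (k + 1)"
    using conc Suc.prems unfolding midpoint_concave_def by simp
  then have "real (k + 1) * b (k + 2) \<le> real (k + 1) * (2 * b (k + 1) - b k)"
    by (intro mult_left_mono) auto
  also have "\<dots> \<le> real (k + 2) * b (k + 1)" using IH by (simp add: algebra_simps)
  finally show ?case by (simp add: numeral_2_eq_2)
qed

lemma chord_ratio:
  assumes conc: "midpoint_concave N b" and b0: "b 0 = 0"
    and "1 \<le> i" "i \<le> k" "k \<le> N"
  shows "real i * b k \<le> real k * b i"
  using assms(4,5)
proof (induction k rule: dec_induct)
  case base then show ?case by simp
next
  case (step k)
  have IH: "real i * b k \<le> real k * b i" using step by simp
  have St: "real k * b (k + 1) \<le> real (k + 1) * b k"
    using chord_step[OF conc b0] step by simp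
  have kpos: "real k > 0" using assms(3) step by simp
  have "real k * (real i * b (k + 1)) = real i * (real k * b (k + 1))" by simp
  also have "\<dots> \<le> real i * (real (k + 1) * b k)" using St by (intro mult_left_mono) auto
  also have "\<dots> = real (k + 1) * (real i * b k)" by simp
  also have "\<dots> \<le> real (k + 1) * (real k * b i)" using IH by (intro mult_left_mono) auto
  also have "\<dots> = real k * (real (k + 1) * b i)" by simp
  finally show ?case using kpos by simp
qed

(* Summing the chord property: the partial sum up to k is at least (k+1)/2 * b k. *)
lemma partial_sum_lower:
  assumes conc: "midpoint_concave N b" and b0: "b 0 = 0" and "1 \<le> k" "k \<le> N"
  shows "(real k + 1) / 2 * b k \<le> (\<Sum>i=1..k. b i)"
proof -
  have "(\<Sum>i=1..k. real i * b k / real k) \<le> (\<Sum>i=1..k. b i)"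
  proof (rule sum_mono)
    fix i assume "i \<in> {1..k}"
    then have "real i * b k \<le> real k * b i"
      using assms by (intro chord_ratio[OF conc b0]) auto
    then show "real i * b k / real k \<le> b i" using assms(3) by (simp add: divide_simps mult.commute)
  qed
  moreover have "(\<Sum>i=1..k. real i * b k / real k) = (real k + 1) / 2 * b k"
  proof -
    have "(\<Sum>i=1..k. real i * b k / real k) = (\<Sum>i=1..k. real i) * b k / real k"
      by (simp add: sum_distrib_right sum_divide_distrib)
    also have "(\<Sum>i=1..k. real i) = real k * (real k + 1) / 2"
      using double_gauss_sum_from_Suc_0[of k, where 'a=real] by simp
    also have "real k * (real k + 1) / 2 * b k / real k = (real k + 1) / 2 * b k"
      using assms(3) by simp
    finally show ?thesis .
  qed
  ultimately show ?thesis by simp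
qed

(* A concave sequence vanishing at 0 and n+1 is dominated by its average:
   counting the partial sums from the left and from the right. *)
lemma value_le_average:
  assumes conc: "midpoint_concave (n + 1) b" and b0: "b 0 = 0" and bn: "b (n + 1) = 0"
    and k: "k \<in> {1..n}"
  shows "(real n + 1) / 2 * b k \<le> (\<Sum>i=1..n. b i)"
proof -
  define c where "c j = b (n + 1 - j)" for j
  have cconc: "midpoint_concave (n + 1) c"
    unfolding midpoint_concave_def
  proof (intro allI impI)
    fix i assume i: "i + 2 \<le> n + 1"
    have "b (n-1-i) + b (n-1-i+2) \<le> 2 * b (n-1-i+1)"
      using conc i unfolding midpoint_concave_def by simp
    moreover have "n-1-i+2 = n+1-i" "n-1-i+1 = n+1-(i+1)" "n-1-i = n+1-(i+2)" using i by auto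
    ultimately show "c i + c (i + 2) \<le> 2 * c (i + 1)" unfolding c_def by (simp add: add.commute)
  qed
  have left: "(real k + 1) / 2 * b k \<le> (\<Sum>i=1..k. b i)"
    using partial_sum_lower[OF conc b0] k by simp
  have "c 0 = 0" using bn by (simp add: c_def)
  then have "(real (n + 1 - k) + 1) / 2 * c (n + 1 - k) \<le> (\<Sum>j=1..n+1-k. c j)"
    by (rule partial_sum_lower[OF cconc]) (use k in auto)
  moreover have "(\<Sum>j=1..n+1-k. c j) = (\<Sum>i=k..n. b i)"
    unfolding c_def
    by (rule sum.reindex_bij_witness[where i="\<lambda>i. n+1-i" and j="\<lambda>j. n+1-j"]) (use k in auto)
  moreover have "c (n + 1 - k) = b k" "real (n + 1 - k) = real n - real k + 1"
    using k by (auto simp: c_def of_nat_diff)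
  ultimately have right: "(real n - real k + 2) / 2 * b k \<le> b k + (\<Sum>i=Suc k..n. b i)"
    using k by (simp add: sum.atLeast_Suc_atMost ac_simps)
  have "(\<Sum>i=1..n. b i) = sum b ({1..k} \<union> {Suc k..n})"
    using k by (intro sum.cong) auto
  also have "\<dots> = (\<Sum>i=1..k. b i) + (\<Sum>i=Suc k..n. b i)"
    by (rule sum.union_disjoint) auto
  finally show ?thesis using left right by (simp add: field_simps)
qed

definition padded_squares :: "nat \<Rightarrow> (nat \<Rightarrow> real) \<Rightarrow> nat \<Rightarrow> real" where
  "padded_squares n \<sigma> i = (if 1 \<le> i \<and> i \<le> n then (\<sigma> i)^2 else 0)"

lemma padded_squares_nth:
  assumes "i \<le> n + 1"
  shows "([0] @ map (\<lambda>i. (\<sigma> i)^2) [1..<n+1] @ [0]) ! i = padded_squares n \<sigma> i"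
proof (cases i)
  case 0 then show ?thesis by (simp add: padded_squares_def)
next
  case (Suc j)
  then consider "j < n" | "j = n" using assms by linarith
  then show ?thesis
    by cases (use Suc in \<open>simp_all add: padded_squares_def nth_append del: upt_Suc\<close>)
qed

lemma concave_seq_padded_squares:
  assumes "concave_seq ([0] @ map (\<lambda>i. (\<sigma> i)^2) [1..<n+1] @ [0])"
  shows "midpoint_concave (n + 1) (padded_squares n \<sigma>)"
  unfolding midpoint_concave_def
proof (intro allI impI)
  define L where "L = [0] @ map (\<lambda>i. (\<sigma> i)^2) [1..<n+1] @ [0]"
  fix i assume i: "i + 2 \<le> n + 1"
  have "length L = n + 2" by (simp add: L_def)
  then have "L ! (i + 1) \<ge> (L ! i + L ! (i + 2)) / 2"
    using assms i unfolding concave_seq_def L_def[symmetric] by auto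
  then show "padded_squares n \<sigma> i + padded_squares n \<sigma> (i + 2) \<le> 2 * padded_squares n \<sigma> (i + 1)"
    using i padded_squares_nth[of i n \<sigma>] padded_squares_nth[of "i+1" n \<sigma>]
      padded_squares_nth[of "i+2" n \<sigma>]
    unfolding L_def by simp
qed

lemma sum_padded_squares: "(\<Sum>i=1..n. padded_squares n \<sigma> i) = (\<Sum>i=1..n. (\<sigma> i)^2)"
  by (rule sum.cong) (auto simp: padded_squares_def)

(* A uniform bound for the quadratic form on the hyperplane bounds the supremum;
   n >= 2 guarantees that the set of quotients is nonempty. *)
lemma Sup_rayleigh_le:
  assumes n: "n \<ge> 2"
    and bound: "\<And>x. (\<Sum>i=1..n. x i) = 0 \<Longrightarrow>
                  (\<Sum>i=1..n. (\<sigma> i)^2 * (x i)^2) \<le> B * (\<Sum>i=1..n. (x i)^2)"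
  shows "Sup (rayleigh_values n \<sigma>) \<le> B"
proof (rule cSup_least)
  define x0 where "x0 (i::nat) = (if i = 1 then 1 else if i = 2 then -1 else (0::real))" for i
  have "{1..n} = insert 1 (insert 2 {3..n})" using n by auto
  then have "(\<Sum>i=1..n. x0 i) = 0" by (simp add: x0_def)
  moreover have "\<exists>i\<in>{1..n}. x0 i \<noteq> 0" using n by (intro bexI[of _ 1]) (auto simp: x0_def)
  ultimately show "rayleigh_values n \<sigma> \<noteq> {}" unfolding rayleigh_values_def by blast
next
  fix v assume "v \<in> rayleigh_values n \<sigma>"
  then obtain x i where v: "v = (\<Sum>i=1..n. (\<sigma> i)^2 * (x i)^2) / (\<Sum>i=1..n. (x i)^2)"
    and i: "i \<in> {1..n}" "x i \<noteq> 0" and s0: "(\<Sum>i=1..n. x i) = 0"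
    unfolding rayleigh_values_def by blast
  have "(\<Sum>i=1..n. (x i)^2) > 0" using i by (intro sum_pos2[where i=i]) auto
  then show "v \<le> B" unfolding v using bound[OF s0] by (simp add: pos_divide_le_eq)
qed

section \<open>The case n >= 5\<close>

(* For n >= 5 the quotient is at most max_k sigma_k^2 <= 2T/(n+1), and 4/(n+1) < (n-1)/n. *)
lemma main_bound_large_n:
  assumes n: "n \<ge> 5" and pos: "\<And>i. i \<in> {1..n} \<Longrightarrow> \<sigma> i > 0"
    and conc: "midpoint_concave (n + 1) (padded_squares n \<sigma>)"
  shows "(real n - 1) / real n * (\<Sum>i=1..n. (\<sigma> i)^2) > 2 * Sup (rayleigh_values n \<sigma>)"
proof -
  define M where "M = Max ((\<lambda>i. (\<sigma> i)^2) ` {1..n})"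
  have "M \<in> (\<lambda>i. (\<sigma> i)^2) ` {1..n}" unfolding M_def using n by (intro Max_in) auto
  then obtain k where k: "k \<in> {1..n}" and Mk: "M = (\<sigma> k)^2" by blast
  have Mpos: "M > 0" using pos[OF k] Mk by simp
  have sup_le: "Sup (rayleigh_values n \<sigma>) \<le> M"
  proof (rule Sup_rayleigh_le)
    fix x :: "nat \<Rightarrow> real"
    have "(\<Sum>i=1..n. (\<sigma> i)^2 * (x i)^2) \<le> (\<Sum>i=1..n. M * (x i)^2)"
      unfolding M_def by (intro sum_mono mult_right_mono Max_ge) auto
    then show "(\<Sum>i=1..n. (\<sigma> i)^2 * (x i)^2) \<le> M * (\<Sum>i=1..n. (x i)^2)"
      by (simp add: sum_distrib_left)
  qed (use n in simp)
  have avg: "(real n + 1) / 2 * M \<le> (\<Sum>i=1..n. (\<sigma> i)^2)"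
    using value_le_average[OF conc _ _ k] k Mk
    by (simp add: padded_squares_def sum_padded_squares)
  have "4 * real n < (real n - 1) * (real n + 1)"
  proof -
    have "5 * real n \<le> real n * real n" using n by (intro mult_right_mono) auto
    moreover have "(real n - 1) * (real n + 1) = real n * real n - 1" by algebra
    ultimately show ?thesis using n by linarith
  qed
  then have "4 * real n * M < (real n - 1) * (real n + 1) * M"
    using Mpos by (intro mult_strict_right_mono) auto
  then have strict: "2 * M < (real n - 1) / real n * ((real n + 1) / 2 * M)"
    using n by (simp add: field_simps)
  have "2 * Sup (rayleigh_values n \<sigma>) \<le> 2 * M" using sup_le by simp
  also have "\<dots> < (real n - 1) / real n * ((real n + 1) / 2 * M)" by (fact strict)
  also have "\<dots> \<le> (real n - 1) / real n * (\<Sum>i=1..n. (\<sigma> i)^2)"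
    using avg n by (intro mult_left_mono) auto
  finally show ?thesis .
qed

section \<open>The case n = 4\<close>

(* Sum-of-squares certificate: each quadratic form Q_j is positive semidefinite on the
   hyperplane x1+x2+x3+x4 = 0, and 37 * trace * |x|^2 - 100 * (quadratic form) is the
   combination of the Q_j weighted by the (nonnegative) concavity defects d_j. *)
lemma four_point_certificate:
  fixes a1 a2 a3 a4 x1 x2 x3 x4 :: real
  assumes c1: "a2 \<le> 2*a1" and c2: "a1 + a3 \<le> 2*a2" and c3: "a2 + a4 \<le> 2*a3" and c4: "a3 \<le> 2*a4"
    and s: "x1 + x2 + x3 + x4 = 0"
  shows "100*(a1*x1^2 + a2*x2^2 + a3*x3^2 + a4*x4^2) \<le> 37*(a1+a2+a3+a4)*(x1^2+x2^2+x3^2+x4^2)"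
proof -
  have x4: "x4 = -(x1+x2+x3)" using s by simp
  define Q1 where "Q1 = -6*x1^2 + 14*x2^2 + 34*x3^2 + 54*x4^2"
  define Q2 where "Q2 = 51*x1^2 - 9*x2^2 + 31*x3^2 + 71*x4^2"
  define Q3 where "Q3 = 71*x1^2 + 31*x2^2 - 9*x3^2 + 51*x4^2"
  define Q4 where "Q4 = 54*x1^2 + 34*x2^2 + 14*x3^2 - 6*x4^2"
  have q1: "Q1 = 100*(12/25*(x1 + 9/8*x2 + 9/8*x3)^2 + 29/400*(x2 - 27/29*x3)^2 + 152/725*x3^2)"
    unfolding Q1_def x4 by algebra
  have q2: "Q2 = 100*(61/50*(x1 + 71/122*x2 + 71/122*x3)^2 + 2523/12200*(x2 + 1207/841*x3)^2
                 + 3802/21025*x3^2)"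
    unfolding Q2_def x4 by algebra
  have q3: "Q3 = 100*(61/50*(x1 + 51/122*x2 + 51/122*x3)^2 + 7403/12200*(x2 + 3621/7403*x3)^2
                 + 11406/185075*x3^2)"
    unfolding Q3_def x4 by algebra
  have q4: "Q4 = 100*(12/25*(x1 - 1/8*x2 - 1/8*x3)^2 + 109/400*(x2 - 27/109*x3)^2 + 152/2725*x3^2)"
    unfolding Q4_def x4 by algebra
  have "Q1 \<ge> 0" "Q2 \<ge> 0" "Q3 \<ge> 0" "Q4 \<ge> 0"
    unfolding q1 q2 q3 q4 by (intro mult_nonneg_nonneg add_nonneg_nonneg; simp)+
  then have "0 \<le> (2*a1 - a2)*Q1 + (2*a2 - a1 - a3)*Q2 + (2*a3 - a2 - a4)*Q3 + (2*a4 - a3)*Q4"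
    using c1 c2 c3 c4 by (intro add_nonneg_nonneg mult_nonneg_nonneg) auto
  moreover have "37*(a1+a2+a3+a4)*(x1^2+x2^2+x3^2+x4^2) - 100*(a1*x1^2 + a2*x2^2 + a3*x3^2 + a4*x4^2)
     = (2*a1 - a2)*Q1 + (2*a2 - a1 - a3)*Q2 + (2*a3 - a2 - a4)*Q3 + (2*a4 - a3)*Q4"
    unfolding Q1_def Q2_def Q3_def Q4_def by algebra
  ultimately show ?thesis by linarith
qed

lemma sum_1_to_4: "(\<Sum>i=1..4. f i) = f 1 + f 2 + f 3 + f (4::nat)" for f :: "nat \<Rightarrow> real"
proof -
  have "{1..4::nat} = {1,2,3,4}" by auto
  then show ?thesis by simp
qed

(* For n = 4 the certificate gives 2 * Sup <= 74/100 * T < 3/4 * T. *)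
lemma main_bound_n4:
  assumes pos: "\<And>i. i \<in> {1..4} \<Longrightarrow> \<sigma> i > 0"
    and conc: "midpoint_concave 5 (padded_squares 4 \<sigma>)"
  shows "(real 4 - 1) / real 4 * (\<Sum>i=1..4. (\<sigma> i)^2) > 2 * Sup (rayleigh_values 4 \<sigma>)"
proof -
  define T where "T = (\<Sum>i=1..4. (\<sigma> i)^2)"
  have "(\<sigma> i)^2 > 0" if "i \<in> {1..4}" for i using pos[OF that] by simp
  then have "T > 0" unfolding T_def by (intro sum_pos) auto
  have c: "padded_squares 4 \<sigma> i + padded_squares 4 \<sigma> (i + 2) \<le> 2 * padded_squares 4 \<sigma> (i + 1)"
    if "i \<le> 3" for i
    using conc that unfolding midpoint_concave_def by simp
  have "Sup (rayleigh_values 4 \<sigma>) \<le> 37/100 * T"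
  proof (rule Sup_rayleigh_le)
    fix x :: "nat \<Rightarrow> real" assume "(\<Sum>i=1..4. x i) = 0"
    then have "x 1 + x 2 + x 3 + x 4 = 0" using sum_1_to_4[of x] by simp
    moreover note c[of 0] c[of 1] c[of 2] c[of 3]
    ultimately have "100*((\<sigma> 1)^2*(x 1)^2 + (\<sigma> 2)^2*(x 2)^2 + (\<sigma> 3)^2*(x 3)^2 + (\<sigma> 4)^2*(x 4)^2)
        \<le> 37*((\<sigma> 1)^2+(\<sigma> 2)^2+(\<sigma> 3)^2+(\<sigma> 4)^2)*((x 1)^2+(x 2)^2+(x 3)^2+(x 4)^2)"
      by (intro four_point_certificate) (simp_all add: padded_squares_def eval_nat_numeral)
    then show "(\<Sum>i=1..4. (\<sigma> i)^2 * (x i)^2) \<le> 37/100 * T * (\<Sum>i=1..4. (x i)^2)"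
      unfolding T_def sum_1_to_4 by simp
  qed simp
  then show ?thesis using \<open>T > 0\<close> unfolding T_def[symmetric] by simp
qed

theorem mainTheorem6:
  fixes n :: nat and \<sigma> :: "nat \<Rightarrow> real"
  assumes "n \<ge> 4"
    and "\<And>i. i \<in> {1..n} \<Longrightarrow> \<sigma> i > 0"
    and "concave_seq ([0] @ map (\<lambda>i. (\<sigma> i)^2) [1..<n+1] @ [0])"
  shows "(real n - 1) / real n * (\<Sum>i=1..n. (\<sigma> i)^2) > 2 * Sup (rayleigh_values n \<sigma>)"
proof -
  have conc: "midpoint_concave (n + 1) (padded_squares n \<sigma>)"
    using concave_seq_padded_squares[OF assms(3)] .
  show ?thesis
  proof (cases "n = 4")
    case True
    then show ?thesis using main_bound_n4[of \<sigma>] assms(2) conc by simp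
  next
    case False
    then show ?thesis using main_bound_large_n[OF _ assms(2) conc] assms(1) by simp
  qed
qed

end
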